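(* Let $\rho$ be a probability measure on $\mathbb R$ with $\int\log(1+x^2)\rho(\mathrm dx)<+\infty$ and let $c>0$. For $M>0$ define the truncation $\rho^{[M]}(\mathrm ds)=\rho((-\infty,-M])\delta_{-M}(\mathrm ds)+\mathbbm 1_{(-M,M)}(s)\rho(\mathrm ds)+\rho([M,+\infty))\delta_M(\mathrm ds)$. Let $(\rho^{[M]})^{(c)}$ be the law of the random mean of $D_{c\rho^{[M]}}$ and $\rho^{(c)}$ the law of the random mean of $D_{c\rho}$. Then $(\rho^{[M]})^{(c)}\to\rho^{(c)}$ weakly as $M\to\infty$.
   Context: For a probability measure $\rho$ on $\mathbb R$ and $c>0$, the Dirichlet process $D_{c\rho}$ is the random probability measure on $\mathbb R$ such that for every finite measurable partition $A_1,\dots,A_k$ of $\mathbb R$, $(D_{c\rho}(A_1),\dots,D_{c\rho}(A_k))$ has the Dirichlet distribution $\mathrm{Dir}_{(c\rho(A_1),\dots,c\rho(A_k))}$. When $\int\log(1+x^2)\rho(\mathrm dx)<\infty$, the random mean $\int x\,D_{c\rho}(\mathrm dx)$ converges absolutely almost surely; its law is denoted $\rho^{(c)}$. *)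

theory Defs
  imports "HOL-Probability.Probability"
begin

definition gamma_density :: "real \<Rightarrow> real \<Rightarrow> real" where
  "gamma_density a x = (if x > 0 then x powr (a - 1) * exp (- x) / Gamma a else 0)"

definition gamma_measure :: "real \<Rightarrow> real measure" where
  "gamma_measure a = (if a = 0 then return borel 0
                      else density lborel (\<lambda>x. ennreal (gamma_density a x)))"

text \<open>Dirichlet distribution Dir_(alpha 0, ..., alpha (k-1)) on vectors indexed by {..<k}
  (Ferguson's construction: normalised independent Gamma(alpha i, 1) variables,
  which also covers zero parameters).\<close>
definition dirichlet :: "nat \<Rightarrow> (nat \<Rightarrow> real) \<Rightarrow> (nat \<Rightarrow> real) measure" where
  "dirichlet k alpha =
     distr (PiM {..<k} (\<lambda>i. gamma_measure (alpha i))) (PiM {..<k} (\<lambda>_. borel))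
       (\<lambda>y. \<lambda>i\<in>{..<k}. y i / (\<Sum>j<k. y j))"

definition is_dirichlet_process ::
  "'a measure \<Rightarrow> real \<Rightarrow> real measure \<Rightarrow> ('a \<Rightarrow> real measure) \<Rightarrow> bool" where
  "is_dirichlet_process N c \<rho> D \<longleftrightarrow>
     prob_space N \<and> D \<in> N \<rightarrow>\<^sub>M prob_algebra borel \<and>
     (\<forall>k (A :: nat \<Rightarrow> real set). k \<ge> 1 \<and> (\<forall>i<k. A i \<in> sets borel) \<and>
        disjoint_family_on A {..<k} \<and> (\<Union>i<k. A i) = UNIV \<longrightarrow>
        distr N (PiM {..<k} (\<lambda>_. borel)) (\<lambda>\<omega>. \<lambda>i\<in>{..<k}. measure (D \<omega>) (A i))
          = dirichlet k (\<lambda>i. c * measure \<rho> (A i)))"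

definition random_mean_law :: "'a measure \<Rightarrow> ('a \<Rightarrow> real measure) \<Rightarrow> real measure" where
  "random_mean_law N D = distr N borel (\<lambda>\<omega>. \<integral>x. x \<partial>(D \<omega>))"

text \<open>Truncation rho^[M]: mass of (-inf,-M] moved to -M, mass of [M,inf) moved to M.
  This is exactly the push-forward of rho under clamping to [-M,M].\<close>
definition truncate_measure :: "real \<Rightarrow> real measure \<Rightarrow> real measure" where
  "truncate_measure M \<rho> = distr \<rho> borel (\<lambda>x. max (- M) (min M x))"

definition weak_conv_at_top :: "(real \<Rightarrow> real measure) \<Rightarrow> real measure \<Rightarrow> bool" where
  "weak_conv_at_top \<mu> \<nu> \<longleftrightarrow>
     (\<forall>f :: real \<Rightarrow> real. continuous_on UNIV f \<and> bounded (range f) \<longrightarrow>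
        ((\<lambda>M. \<integral>x. f x \<partial>(\<mu> M)) \<longlongrightarrow> (\<integral>x. f x \<partial>\<nu>)) at_top)"

end

theory Submission
  imports Defs
begin

text \<open>
  The random mean of \<open>D\<^sub>M\<close>, the Dirichlet process with base \<open>c \<rho>\<^sup>[\<^sup>M\<^sup>]\<close>, has the same law as
  \<open>\<integral> clip M x D(dx)\<close> for the Dirichlet process \<open>D\<close> with base \<open>c \<rho>\<close>. Indeed \<open>D\<^sub>M\<close> is almost surely
  carried by \<open>[-M, M]\<close>, and both clipped means are limits of Riemann sums \<open>\<Sum>\<^sub>j x\<^sub>j D(C\<^sub>j)\<close> over
  cells \<open>C\<^sub>j\<close> that are unions of fibres of \<open>clip M\<close>; hence \<open>\<rho>\<^sup>[\<^sup>M\<^sup>](C\<^sub>j) = \<rho>(C\<^sub>j)\<close>, and the mass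
  vectors of \<open>D\<^sub>M\<close> and of \<open>D\<close> on the cells have the same Dirichlet law.

  Letting \<open>M \<rightarrow> \<infinity>\<close> in \<open>\<integral> clip M x D(dx)\<close> then only needs \<open>\<integral> |x| D(dx) < \<infinity>\<close> almost surely. The
  mass of a dyadic shell \<open>S\<^sub>n = {2\<^sup>n \<le> |x| < 2\<^sup>n\<^sup>+\<^sup>1}\<close> is a ratio of independent Gamma variables,
  and the Gamma tail estimates together with \<open>\<Sum>\<^sub>n n \<rho>(S\<^sub>n) \<le> \<integral> log(1 + x\<^sup>2) \<rho>(dx) < \<infinity>\<close> make
  \<open>\<Sum>\<^sub>n P(D(S\<^sub>n) > 4\<^sup>-\<^sup>n)\<close> finite, so Borel--Cantelli applies.
\<close>

section \<open>Gamma distribution\<close>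

lemma sets_gamma_measure [simp, measurable_cong]: "sets (gamma_measure a) = sets borel"
  by (simp add: gamma_measure_def)

lemma borel_measurable_gamma_density [measurable]: "gamma_density a \<in> borel_measurable borel"
  unfolding gamma_density_def by measurable

lemma gamma_density_has_integral:
  assumes "a > 0"
  shows "(gamma_density a has_integral 1) {0..}"
proof -
  have "((\<lambda>t. t powr (a - 1) / exp t / Gamma a) has_integral 1) {0..}"
    using has_integral_divide[OF Gamma_integral_real[OF assms], of "Gamma a"] Gamma_real_pos[OF assms]
    by (simp del: Gamma_real_pos)
  then show ?thesis
  proof (rule has_integral_eq[rotated])
    fix x :: real assume "x \<in> {0..}"
    then show "x powr (a - 1) / exp x / Gamma a = gamma_density a x"
      by (cases "x = 0") (auto simp: gamma_density_def exp_minus field_simps)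
  qed
qed

lemma prob_space_gamma_measure:
  assumes "a \<ge> 0"
  shows "prob_space (gamma_measure a)"
proof (cases "a = 0")
  case True
  then show ?thesis by (simp add: gamma_measure_def prob_space_return)
next
  case False
  with assms have "a > 0" by simp
  have "(\<integral>\<^sup>+x. ennreal (gamma_density a x) \<partial>lborel) = (\<integral>\<^sup>+x. ennreal (indicator {0..} x * gamma_density a x) \<partial>lborel)"
    by (intro nn_integral_cong) (auto simp: gamma_density_def)
  also have "\<dots> = 1"
    using nn_integral_has_integral_lebesgue[OF _ gamma_density_has_integral[OF \<open>a > 0\<close>]] \<open>a > 0\<close>
    by (simp add: gamma_density_def)
  finally show ?thesis
    using False by (intro prob_spaceI) (simp add: gamma_measure_def emeasure_density[where A=UNIV, simplified])
qed

lemma AE_gamma_measure_nonneg: "AE x in gamma_measure a. 0 \<le> x"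
proof (cases "a = 0")
  case True
  then show ?thesis
    unfolding gamma_measure_def by simp (subst AE_return; auto)
next
  case False
  then show ?thesis
    unfolding gamma_measure_def by (simp add: AE_density) (auto simp: gamma_density_def)
qed

lemma measure_gamma_measure_le:
  assumes a: "a > 0" and A: "A \<in> sets borel"
    and g: "(g has_integral I) S" "\<And>x. x \<in> S \<Longrightarrow> 0 \<le> g x"
    and dom: "\<And>x. x \<in> A \<Longrightarrow> 0 < x \<Longrightarrow> x \<in> S \<and> x powr (a - 1) * exp (- x) \<le> g x"
  shows "measure (gamma_measure a) A \<le> I / Gamma a"
proof -
  have Gamma: "Gamma a > 0" using a by simp
  have "emeasure (gamma_measure a) A = (\<integral>\<^sup>+x. ennreal (gamma_density a x) * indicator A x \<partial>lborel)"
    using a A by (simp add: gamma_measure_def emeasure_density)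
  also have "\<dots> \<le> (\<integral>\<^sup>+x. ennreal (indicator S x * (g x / Gamma a)) \<partial>lborel)"
  proof (rule nn_integral_mono)
    fix x
    show "ennreal (gamma_density a x) * indicator A x \<le> ennreal (indicator S x * (g x / Gamma a))"
      using dom[of x] Gamma
      by (cases "x \<in> A \<and> 0 < x") (auto simp: gamma_density_def indicator_def intro!: ennreal_leI divide_right_mono)
  qed
  also have "\<dots> = ennreal (I / Gamma a)"
    using g Gamma by (intro nn_integral_has_integral_lebesgue has_integral_divide) auto
  finally show ?thesis
    using has_integral_nonneg[OF g] Gamma unfolding measure_def by (intro enn2real_leI) auto
qed

lemma Gamma_plus_one_ge:
  fixes x :: real
  assumes "x \<ge> 0"
  shows "exp (-2) \<le> Gamma (x + 1)"
proof -
  have "ennreal (exp (-2)) = (\<integral>\<^sup>+t. ennreal (exp (-2)) * indicator {1..2::real} t \<partial>lborel)"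
    by (simp add: nn_integral_cmult_indicator)
  also have "\<dots> \<le> (\<integral>\<^sup>+t. ennreal (indicator {0..} t * t powr (x + 1 - 1) / exp t) \<partial>lborel)"
  proof (rule nn_integral_mono)
    fix t :: real
    have "exp (-2) \<le> t powr x / exp t" if "t \<in> {1..2}"
    proof -
      have "exp (-2) * 1 \<le> exp (- t) * t powr x"
        using that assms by (intro mult_mono ge_one_powr_ge_zero) auto
      then show ?thesis by (simp add: exp_minus field_simps)
    qed
    then show "ennreal (exp (-2)) * indicator {1..2} t \<le> ennreal (indicator {0..} t * t powr (x + 1 - 1) / exp t)"
      by (auto simp: indicator_def)
  qed
  also have "\<dots> = Gamma (x + 1)"
    using assms by (simp add: Gamma_conv_nn_integral_real)
  finally show ?thesis
    using assms by simp
qed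

lemma inverse_Gamma_plus_one_le: "x \<ge> 0 \<Longrightarrow> 1 / Gamma (x + 1) \<le> exp (2::real)"
  using Gamma_plus_one_ge[of x] by (simp add: divide_le_eq exp_minus field_simps)

lemma Gamma_real_plus1: "x > 0 \<Longrightarrow> Gamma (x + 1) = x * Gamma (x :: real)"
  by (rule Gamma_plus1) (auto elim!: nonpos_Ints_cases)

lemma inverse_Gamma_le:
  fixes a :: real
  assumes "a > 0"
  shows "1 / Gamma a \<le> exp 2 * a"
proof -
  have "1 / Gamma a = a * (1 / Gamma (a + 1))"
    using assms by (simp add: Gamma_real_plus1)
  also have "\<dots> \<le> a * exp 2"
    using assms by (intro mult_left_mono inverse_Gamma_plus_one_le) auto
  finally show ?thesis by (simp add: ac_simps)
qed

lemma has_integral_inverse_to_one: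
  fixes s :: real
  assumes "0 < s" "s \<le> 1"
  shows "((\<lambda>t. 1 / t) has_integral - ln s) {s..1}"
proof -
  have "((\<lambda>t. 1 / t) has_integral ln 1 - ln s) {s..1}"
  proof (rule fundamental_theorem_of_calculus_interior)
    show "continuous_on {s..1} ln"
      using assms by (intro continuous_intros) auto
    show "(ln has_vector_derivative 1 / x) (at x)" if "x \<in> {s<..<1}" for x
      using that assms
      by (auto intro!: derivative_eq_intros simp: has_real_derivative_iff_has_vector_derivative[symmetric])
  qed (use assms in auto)
  then show ?thesis by simp
qed

lemma gamma_measure_greater_le:
  fixes a s :: real
  assumes a: "0 \<le> a" "a \<le> 1" and s: "0 < s" "s \<le> 1"
  shows "measure (gamma_measure a) {s<..} \<le> exp 2 * a * (1 - ln s)"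
proof (cases "a = 0")
  case True
  then show ?thesis using s by (simp add: gamma_measure_def measure_return)
next
  case False
  with a have "a > 0" by simp
  have near: "measure (gamma_measure a) {s<..1} \<le> - ln s / Gamma a"
  proof (rule measure_gamma_measure_le[OF \<open>a > 0\<close> _ has_integral_inverse_to_one[OF s]])
    fix x assume x: "x \<in> {s<..1}" "0 < x"
    have "x powr (a - 1) \<le> x powr (- 1)"
      using x a by (intro powr_mono') auto
    then have "x powr (a - 1) * exp (- x) \<le> x powr (- 1) * 1"
      using x by (intro mult_mono) auto
    then show "x \<in> {s..1} \<and> x powr (a - 1) * exp (- x) \<le> 1 / x"
      using x by (simp add: powr_minus_divide)
  qed (use s in auto)
  have far: "measure (gamma_measure a) {1<..} \<le> Gamma 1 / Gamma a"
  proof (rule measure_gamma_measure_le[OF \<open>a > 0\<close> _ Gamma_integral_real])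
    fix x :: real assume x: "x \<in> {1<..}"
    have "x powr (a - 1) \<le> x powr 0"
      using x a by (intro powr_mono) auto
    then show "x \<in> {0..} \<and> x powr (a - 1) * exp (- x) \<le> x powr (1 - 1) / exp x"
      using x by (simp add: exp_minus divide_right_mono field_simps)
  qed auto
  have "measure (gamma_measure a) {s<..} \<le> measure (gamma_measure a) {s<..1} + measure (gamma_measure a) {1<..}"
    using measure_Un_le[of "{s<..1}" "gamma_measure a" "{1<..}"] s by (simp add: ivl_disj_un)
  also have "\<dots> \<le> (1 - ln s) * (1 / Gamma a)"
    using near far by (simp add: diff_divide_distrib)
  also have "\<dots> \<le> (1 - ln s) * (exp 2 * a)"
    using s \<open>a > 0\<close> ln_le_minus_one[of s] by (intro mult_left_mono inverse_Gamma_le) auto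
  finally show ?thesis by (simp add: ac_simps)
qed

lemma gamma_measure_less_le:
  fixes b d :: real
  assumes "0 < b" "0 < d"
  shows "measure (gamma_measure b) {..<d} \<le> exp 2 * d powr b"
proof -
  have "measure (gamma_measure b) {..<d} \<le> d powr (b - 1 + 1) / (b - 1 + 1) / Gamma b"
  proof (rule measure_gamma_measure_le[OF \<open>0 < b\<close> _ has_integral_powr_from_0])
    fix x :: real assume "x \<in> {..<d}" "0 < x"
    then show "x \<in> {0..d} \<and> x powr (b - 1) * exp (- x) \<le> x powr (b - 1)"
      by (auto intro: mult_left_le)
  qed (use assms in auto)
  also have "\<dots> = d powr b * (1 / Gamma (b + 1))"
    using assms by (simp add: Gamma_real_plus1)
  also have "\<dots> \<le> d powr b * exp 2"
    using assms by (intro mult_left_mono inverse_Gamma_plus_one_le) auto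
  finally show ?thesis by (simp add: ac_simps)
qed

section \<open>Dirichlet processes\<close>

lemma measure_PiM_component:
  assumes "\<And>i. i \<in> I \<Longrightarrow> prob_space (M i)" "i \<in> I" "A \<in> sets (M i)"
  shows "measure (PiM I M) {y \<in> space (PiM I M). y i \<in> A} = measure (M i) A"
proof -
  have "measure (PiM I M) {y \<in> space (PiM I M). y i \<in> A} = measure (distr (PiM I M) (M i) (\<lambda>y. y i)) A"
    using assms by (subst measure_distr) (auto intro!: arg_cong2[where f=measure])
  also have "\<dots> = measure (M i) A"
    using assms by (subst distr_PiM_component) auto
  finally show ?thesis .
qed

lemma dirichlet_2_tail_le:
  assumes \<alpha>: "\<And>i. 0 \<le> \<alpha> i" and "0 < \<delta>"
  shows "measure (dirichlet 2 \<alpha>) {v \<in> space (PiM {..<2} (\<lambda>_. borel)). t < v 0}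
    \<le> measure (gamma_measure (\<alpha> 0)) {t * \<delta><..} + measure (gamma_measure (\<alpha> 1)) {..<\<delta>}"
proof -
  let ?P = "PiM {..<2::nat} (\<lambda>i. gamma_measure (\<alpha> i))"
  interpret P: prob_space ?P
    using \<alpha> by (intro prob_space_PiM prob_space_gamma_measure)
  have "measure (dirichlet 2 \<alpha>) {v \<in> space (PiM {..<2} (\<lambda>_. borel)). t < v 0}
      = measure ?P {y \<in> space ?P. t < y 0 / (y 0 + y 1)}"
    unfolding dirichlet_def
    by (subst measure_distr) (auto intro!: arg_cong2[where f=measure] simp: numeral_2_eq_2 space_PiM)
  also have "\<dots> \<le> measure ?P ({y \<in> space ?P. y 0 \<in> {t * \<delta><..}} \<union> {y \<in> space ?P. y 1 \<in> {..<\<delta>}})"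
  proof (rule P.finite_measure_mono_AE)
    have "AE y in ?P. 0 \<le> y 0"
      using \<alpha> by (intro AE_PiM_component prob_space_gamma_measure AE_gamma_measure_nonneg) auto
    then show "AE y in ?P. y \<in> {y \<in> space ?P. t < y 0 / (y 0 + y 1)}
        \<longrightarrow> y \<in> {y \<in> space ?P. y 0 \<in> {t * \<delta><..}} \<union> {y \<in> space ?P. y 1 \<in> {..<\<delta>}}"
    proof eventually_elim
      case (elim y)
      have "y 0 / (y 0 + y 1) \<le> t" if "y 0 \<le> t * \<delta>" "\<delta> \<le> y 1"
      proof -
        have "y 0 / (y 0 + y 1) \<le> y 0 / y 1"
          using elim that \<open>0 < \<delta>\<close> by (intro divide_left_mono) auto
        also have "\<dots> \<le> t * \<delta> / \<delta>"
          using elim that \<open>0 < \<delta>\<close> by (intro frac_le) auto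
        finally show ?thesis using \<open>0 < \<delta>\<close> by simp
      qed
      then show ?case by force
    qed
  qed measurable
  also have "\<dots> \<le> measure ?P {y \<in> space ?P. y 0 \<in> {t * \<delta><..}} + measure ?P {y \<in> space ?P. y 1 \<in> {..<\<delta>}}"
    by (rule measure_Un_le) measurable
  also have "\<dots> = measure (gamma_measure (\<alpha> 0)) {t * \<delta><..} + measure (gamma_measure (\<alpha> 1)) {..<\<delta>}"
  proof -
    have component: "measure ?P {y \<in> space ?P. y i \<in> B} = measure (gamma_measure (\<alpha> i)) B"
      if "i < 2" "B \<in> sets borel" for i B
      using that \<alpha> by (intro measure_PiM_component prob_space_gamma_measure) auto
    show ?thesis
      using component[of 0 "{t * \<delta><..}"] component[of 1 "{..<\<delta>}"] by simp
  qed
  finally show ?thesis .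
qed

lemma AE_dirichlet_component_zero:
  assumes \<alpha>: "\<And>i. 0 \<le> \<alpha> i" and "\<alpha> i = 0" "i < k"
  shows "AE v in dirichlet k \<alpha>. v i = 0"
proof -
  have "AE y in PiM {..<k} (\<lambda>i. gamma_measure (\<alpha> i)). y i = 0"
  proof (rule AE_PiM_component)
    show "AE y in gamma_measure (\<alpha> i). y = 0"
      using \<open>\<alpha> i = 0\<close> unfolding gamma_measure_def by simp (subst AE_return; auto)
  qed (use \<alpha> \<open>i < k\<close> in \<open>auto intro: prob_space_gamma_measure\<close>)
  then show ?thesis
    unfolding dirichlet_def using \<open>i < k\<close> by (subst AE_distr_iff) auto
qed

lemma dirichlet_process_prob_space: "is_dirichlet_process N c \<rho> D \<Longrightarrow> prob_space N"
  by (simp add: is_dirichlet_process_def)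

lemma measurable_dirichlet_process: "is_dirichlet_process N c \<rho> D \<Longrightarrow> D \<in> N \<rightarrow>\<^sub>M prob_algebra borel"
  by (simp add: is_dirichlet_process_def)

lemma
  assumes "is_dirichlet_process N c \<rho> D" "\<omega> \<in> space N"
  shows prob_space_dirichlet_process_sample: "prob_space (D \<omega>)"
    and sets_dirichlet_process_sample: "sets (D \<omega>) = sets borel"
  using measurable_space[OF measurable_dirichlet_process[OF assms(1)] assms(2)]
  by (auto simp: space_prob_algebra)

lemma measurable_dirichlet_process_masses:
  assumes "is_dirichlet_process N c \<rho> D" "\<And>i. i \<in> I \<Longrightarrow> A i \<in> sets borel"
  shows "(\<lambda>\<omega>. \<lambda>i\<in>I. measure (D \<omega>) (A i)) \<in> N \<rightarrow>\<^sub>M PiM I (\<lambda>_. borel)"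
  using assms
  by (intro measurable_restrict measurable_compose[OF measurable_dirichlet_process measurable_measure_prob_algebra])

lemma distr_dirichlet_process_partition:
  assumes "is_dirichlet_process N c \<rho> D" "k \<ge> 1" "\<And>i. i < k \<Longrightarrow> A i \<in> sets borel"
    "disjoint_family_on A {..<k}" "(\<Union>i<k. A i) = UNIV"
  shows "distr N (PiM {..<k} (\<lambda>_. borel)) (\<lambda>\<omega>. \<lambda>i\<in>{..<k}. measure (D \<omega>) (A i))
    = dirichlet k (\<lambda>i. c * measure \<rho> (A i))"
  using assms unfolding is_dirichlet_process_def by blast

lemma integral_dirichlet_process_partition:
  fixes g :: "(nat \<Rightarrow> real) \<Rightarrow> real"
  assumes dp: "is_dirichlet_process N c \<rho> D" and A: "k \<ge> 1" "\<And>i. i < k \<Longrightarrow> A i \<in> sets borel"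
    "disjoint_family_on A {..<k}" "(\<Union>i<k. A i) = UNIV"
    and g: "g \<in> borel_measurable (PiM {..<k} (\<lambda>_. borel))"
  shows "(\<integral>\<omega>. g (\<lambda>i\<in>{..<k}. measure (D \<omega>) (A i)) \<partial>N) = (\<integral>v. g v \<partial>dirichlet k (\<lambda>i. c * measure \<rho> (A i)))"
proof -
  have masses: "(\<lambda>\<omega>. \<lambda>i\<in>{..<k}. measure (D \<omega>) (A i)) \<in> N \<rightarrow>\<^sub>M PiM {..<k} (\<lambda>_. borel)"
    using A by (intro measurable_dirichlet_process_masses[OF dp]) auto
  show ?thesis
    using integral_distr[OF masses g] distr_dirichlet_process_partition[OF dp A] by simp
qed

definition bipartition :: "'a set \<Rightarrow> nat \<Rightarrow> 'a set" where
  "bipartition A i = (if i = 0 then A else - A)"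

lemma distr_dirichlet_process_bipartition:
  assumes "is_dirichlet_process N c \<rho> D" "A \<in> sets borel"
  shows "distr N (PiM {..<2} (\<lambda>_. borel)) (\<lambda>\<omega>. \<lambda>i\<in>{..<2}. measure (D \<omega>) (bipartition A i))
    = dirichlet 2 (\<lambda>i. c * measure \<rho> (bipartition A i))"
  using assms
  by (intro distr_dirichlet_process_partition)
    (auto simp: bipartition_def disjoint_family_on_def lessThan_nat_numeral)

lemma measure_bipartition_compl:
  assumes "prob_space \<rho>" "sets \<rho> = sets borel" "A \<in> sets borel"
  shows "measure \<rho> (bipartition A 1) = 1 - measure \<rho> A"
proof -
  interpret prob_space \<rho> by fact
  have "space \<rho> = UNIV"
    using sets_eq_imp_space_eq[OF assms(2)] by simp
  then show ?thesis
    using prob_compl[of A] assms by (simp add: bipartition_def Compl_eq_Diff_UNIV)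
qed

lemma dirichlet_process_tail_le:
  assumes dp: "is_dirichlet_process N c \<rho> D" and \<rho>: "prob_space \<rho>" "sets \<rho> = sets borel"
    and A: "A \<in> sets borel" "c * measure \<rho> A \<le> 1" "measure \<rho> A < 1"
    and "c > 0" "t > 0" "0 < \<delta>" "\<delta> \<le> 1" "t * \<delta> \<le> 1"
  shows "measure N {\<omega> \<in> space N. t < measure (D \<omega>) A}
    \<le> exp 2 * (c * measure \<rho> A) * (1 - ln (t * \<delta>)) + exp 2 * \<delta> powr (c * (1 - measure \<rho> A))"
proof -
  define \<alpha> where "\<alpha> i = c * measure \<rho> (bipartition A i)" for i
  have \<alpha>: "\<alpha> 0 = c * measure \<rho> A" "\<alpha> 1 = c * (1 - measure \<rho> A)"
    using measure_bipartition_compl[OF \<rho> A(1)] by (simp_all add: \<alpha>_def bipartition_def)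
  have "measure N {\<omega> \<in> space N. t < measure (D \<omega>) A}
      = measure (distr N (PiM {..<2} (\<lambda>_. borel)) (\<lambda>\<omega>. \<lambda>i\<in>{..<2}. measure (D \<omega>) (bipartition A i)))
          {v \<in> space (PiM {..<2} (\<lambda>_. borel)). t < v 0}"
    using A by (subst measure_distr[OF measurable_dirichlet_process_masses[OF dp]])
      (auto intro!: arg_cong2[where f=measure] simp: bipartition_def space_PiM)
  also have "\<dots> = measure (dirichlet 2 \<alpha>) {v \<in> space (PiM {..<2} (\<lambda>_. borel)). t < v 0}"
    unfolding distr_dirichlet_process_bipartition[OF dp A(1)] \<alpha>_def ..
  also have "\<dots> \<le> measure (gamma_measure (\<alpha> 0)) {t * \<delta><..} + measure (gamma_measure (\<alpha> 1)) {..<\<delta>}"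
    using \<open>c > 0\<close> \<open>0 < \<delta>\<close> by (intro dirichlet_2_tail_le) (auto simp: \<alpha>_def)
  also have "\<dots> \<le> exp 2 * \<alpha> 0 * (1 - ln (t * \<delta>)) + exp 2 * \<delta> powr (\<alpha> 1)"
    unfolding \<alpha> using assms by (intro add_mono gamma_measure_greater_le gamma_measure_less_le) auto
  finally show ?thesis by (simp only: \<alpha>)
qed

lemma AE_dirichlet_process_null:
  assumes dp: "is_dirichlet_process N c \<rho> D" and "c \<ge> 0"
    and A: "A \<in> sets borel" "measure \<rho> A = 0"
  shows "AE \<omega> in N. measure (D \<omega>) A = 0"
proof -
  have "AE v in dirichlet 2 (\<lambda>i. c * measure \<rho> (bipartition A i)). v 0 = 0"
    using assms by (intro AE_dirichlet_component_zero) (auto simp: bipartition_def)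
  then show ?thesis
    unfolding distr_dirichlet_process_bipartition[OF dp A(1), symmetric]
    using A by (subst (asm) AE_distr_iff[OF measurable_dirichlet_process_masses[OF dp]])
      (auto simp: bipartition_def)
qed

section \<open>Integrability of the random mean\<close>

definition dyadic_shell :: "nat \<Rightarrow> real set" where
  "dyadic_shell n = {x. 2 ^ n \<le> \<bar>x\<bar> \<and> \<bar>x\<bar> < 2 ^ Suc n}"

lemma dyadic_shell_sets [measurable]: "dyadic_shell n \<in> sets borel"
  unfolding dyadic_shell_def by measurable

lemma dyadic_shell_unique: "x \<in> dyadic_shell m \<Longrightarrow> x \<in> dyadic_shell n \<Longrightarrow> m = n"
proof -
  assume "x \<in> dyadic_shell m" "x \<in> dyadic_shell n"
  then have "(2::real) ^ m < 2 ^ Suc n" "(2::real) ^ n < 2 ^ Suc m"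
    by (auto simp: dyadic_shell_def)
  then have "m < Suc n" "n < Suc m"
    by (simp_all only: power_strict_increasing_iff[of "2::real"])
  then show "m = n" by simp
qed

lemma mem_dyadic_shell_floor_log:
  assumes "1 \<le> \<bar>x\<bar>"
  shows "x \<in> dyadic_shell (nat \<lfloor>log 2 \<bar>x\<bar>\<rfloor>)"
proof -
  define k where "k = \<lfloor>log 2 \<bar>x\<bar>\<rfloor>"
  have "k \<ge> 0"
    using assms by (simp add: k_def)
  moreover have "2 powr k \<le> \<bar>x\<bar> \<and> \<bar>x\<bar> < 2 powr (k + 1)"
    using floor_log_eq_powr_iff[of "\<bar>x\<bar>" 2 k] assms by (simp add: k_def)
  ultimately show ?thesis
    by (simp add: dyadic_shell_def k_def[symmetric] powr_add powr_realpow[symmetric])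
qed

lemma suminf_dyadic_shell_indicator:
  assumes "x \<in> dyadic_shell n"
  shows "(\<Sum>m. ennreal (f m * indicator (dyadic_shell m) x)) = ennreal (f n)"
proof -
  have "(\<lambda>m. ennreal (f m * indicator (dyadic_shell m) x)) = (\<lambda>m. if m = n then ennreal (f m) else 0)"
    using assms dyadic_shell_unique by (auto simp: indicator_def)
  then show ?thesis
    using sums_single[of n "\<lambda>m. ennreal (f m)"] by (simp add: sums_iff)
qed

lemma abs_le_dyadic_shell_sum:
  "ennreal \<bar>x\<bar> \<le> 1 + (\<Sum>n. ennreal (2 ^ Suc n * indicator (dyadic_shell n) x))"
proof (cases "1 \<le> \<bar>x\<bar>")
  case True
  then obtain n where n: "x \<in> dyadic_shell n"
    using mem_dyadic_shell_floor_log by blast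
  then have "ennreal \<bar>x\<bar> \<le> ennreal (2 ^ Suc n)"
    by (auto simp: dyadic_shell_def)
  then show ?thesis
    using suminf_dyadic_shell_indicator[OF n] by (simp add: add_increasing)
next
  case False
  then show ?thesis
    by (simp add: add_increasing2)
qed

lemma dyadic_shell_sum_le_ln:
  "(\<Sum>n. ennreal (real n * indicator (dyadic_shell n) x)) \<le> ennreal (ln (1 + x\<^sup>2))"
proof (cases "\<exists>n. x \<in> dyadic_shell n")
  case True
  then obtain n where n: "x \<in> dyadic_shell n" ..
  have "(2 ^ n) ^ 2 \<le> \<bar>x\<bar> ^ 2"
    using n by (intro power_mono) (auto simp: dyadic_shell_def)
  moreover have "(2 ^ n) ^ 2 = (4::real) ^ n"
    unfolding power2_eq_square power_mult_distrib[symmetric] by simp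
  ultimately have "4 ^ n \<le> 1 + x\<^sup>2"
    by simp
  then have "ln (4 ^ n) \<le> ln (1 + x\<^sup>2)"
    by (simp add: add_pos_nonneg)
  moreover have "real n \<le> real n * ln 4"
    using ln_ge_iff[of 4 1] exp_le by (intro mult_le_cancel_left1[THEN iffD2]) auto
  ultimately have "real n \<le> ln (1 + x\<^sup>2)"
    by (simp add: ln_realpow)
  then show ?thesis
    using suminf_dyadic_shell_indicator[OF n, of real] by simp
next
  case False
  then show ?thesis
    by (simp add: indicator_def)
qed

lemma integrable_if_summable_dyadic_shells:
  assumes "finite_measure M" "sets M = sets borel"
    and summable: "summable (\<lambda>n. 2 ^ n * measure M (dyadic_shell n))"
  shows "integrable M (\<lambda>x::real. x)"
proof -
  interpret finite_measure M by fact
  have [measurable]: "(\<lambda>x::real. x) \<in> borel_measurable M"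
    by (rule measurable_ident_sets[OF assms(2)])
  have [measurable]: "dyadic_shell n \<in> sets M" for n
    using assms(2) by simp
  have shell_integral: "(\<integral>\<^sup>+x. ennreal (2 ^ Suc n * indicator (dyadic_shell n) x) \<partial>M)
      = ennreal (2 ^ Suc n * measure M (dyadic_shell n))" for n
  proof -
    have "(\<integral>\<^sup>+x. ennreal (2 ^ Suc n * indicator (dyadic_shell n) x) \<partial>M)
        = (\<integral>\<^sup>+x. ennreal (2 ^ Suc n) * indicator (dyadic_shell n) x \<partial>M)"
      by (intro nn_integral_cong) (simp add: indicator_def)
    then show ?thesis
      by (simp add: nn_integral_cmult_indicator emeasure_eq_measure ennreal_mult)
  qed
  have "(\<integral>\<^sup>+x. ennreal (norm x) \<partial>M) \<le> (\<integral>\<^sup>+x. 1 + (\<Sum>n. ennreal (2 ^ Suc n * indicator (dyadic_shell n) x)) \<partial>M)"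
    using abs_le_dyadic_shell_sum by (intro nn_integral_mono) simp
  also have "\<dots> = (\<integral>\<^sup>+x. 1 \<partial>M) + (\<Sum>n. \<integral>\<^sup>+x. ennreal (2 ^ Suc n * indicator (dyadic_shell n) x) \<partial>M)"
    by (simp add: nn_integral_add nn_integral_suminf)
  also have "\<dots> = emeasure M (space M) + (\<Sum>n. ennreal (2 ^ Suc n * measure M (dyadic_shell n)))"
    by (simp only: shell_integral nn_integral_const mult_1)
  also have "\<dots> < \<infinity>"
    using summable_mult[OF summable, of 2] by (simp add: suminf_ennreal2 emeasure_eq_measure ac_simps)
  finally show ?thesis
    by (simp add: integrable_iff_bounded)
qed

lemma summable_dyadic_shell_log_moment:
  assumes "finite_measure \<rho>" "sets \<rho> = sets borel"
    and log: "(\<integral>\<^sup>+x. ennreal (ln (1 + x\<^sup>2)) \<partial>\<rho>) < \<infinity>"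
  shows "summable (\<lambda>n. real n * measure \<rho> (dyadic_shell n))"
proof -
  interpret finite_measure \<rho> by fact
  have [measurable]: "dyadic_shell n \<in> sets \<rho>" for n
    using assms(2) by simp
  have shell_integral: "(\<integral>\<^sup>+x. ennreal (real n * indicator (dyadic_shell n) x) \<partial>\<rho>)
      = ennreal (real n * measure \<rho> (dyadic_shell n))" for n
  proof -
    have "(\<integral>\<^sup>+x. ennreal (real n * indicator (dyadic_shell n) x) \<partial>\<rho>)
        = (\<integral>\<^sup>+x. ennreal (real n) * indicator (dyadic_shell n) x \<partial>\<rho>)"
      by (intro nn_integral_cong) (simp add: indicator_def)
    then show ?thesis
      by (simp add: nn_integral_cmult_indicator emeasure_eq_measure ennreal_mult)
  qed
  have "(\<Sum>n. ennreal (real n * measure \<rho> (dyadic_shell n)))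
      = (\<integral>\<^sup>+x. (\<Sum>n. ennreal (real n * indicator (dyadic_shell n) x)) \<partial>\<rho>)"
    using assms(2) by (simp add: nn_integral_suminf shell_integral)
  also have "\<dots> \<le> (\<integral>\<^sup>+x. ennreal (ln (1 + x\<^sup>2)) \<partial>\<rho>)"
    by (intro nn_integral_mono dyadic_shell_sum_le_ln)
  finally show ?thesis
    using log by (intro summable_suminf_not_top) (auto simp: top_unique)
qed

lemma dirichlet_process_dyadic_shell_tail_le:
  assumes dp: "is_dirichlet_process N c \<rho> D" and \<rho>: "prob_space \<rho>" "sets \<rho> = sets borel"
    and "c > 0" and small: "c * measure \<rho> (dyadic_shell n) \<le> 1" "measure \<rho> (dyadic_shell n) \<le> 1 / 2"
  shows "measure N {\<omega> \<in> space N. (1/4) ^ n < measure (D \<omega>) (dyadic_shell n)}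
    \<le> exp 2 * c * (measure \<rho> (dyadic_shell n) + ln 8 * (real n * measure \<rho> (dyadic_shell n)))
      + exp 2 * ((1/2) powr (c / 2)) ^ n"
proof -
  define p where "p = measure \<rho> (dyadic_shell n)"
  have "measure N {\<omega> \<in> space N. (1/4) ^ n < measure (D \<omega>) (dyadic_shell n)}
      \<le> exp 2 * (c * p) * (1 - ln ((1/4) ^ n * (1/2) ^ n)) + exp 2 * ((1/2) ^ n) powr (c * (1 - p))"
    unfolding p_def using small \<open>c > 0\<close>
  proof (intro dirichlet_process_tail_le[OF dp \<rho>])
    show "(1/4) ^ n * (1/2) ^ n \<le> (1::real)"
      by (intro mult_le_one) (auto intro: power_le_one)
  qed (auto intro: power_le_one)
  also have "1 - ln ((1/4) ^ n * (1/2) ^ n :: real) = 1 + real n * ln 8"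
    by (simp add: power_mult_distrib[symmetric] ln_realpow ln_div)
  also have "((1/2) ^ n) powr (c * (1 - p)) \<le> ((1/2::real) ^ n) powr (c / 2)"
    using small \<open>c > 0\<close> by (intro powr_mono') (auto simp: p_def power_le_one field_simps)
  also have "((1/2::real) ^ n) powr (c / 2) = ((1/2) powr (c / 2)) ^ n"
    by (simp add: powr_powr powr_realpow[symmetric] mult.commute)
  finally show ?thesis
    by (simp add: p_def algebra_simps)
qed

lemma summable_dirichlet_process_shell_tails:
  assumes dp: "is_dirichlet_process N c \<rho> D" and \<rho>: "prob_space \<rho>" "sets \<rho> = sets borel"
    and log: "(\<integral>\<^sup>+x. ennreal (ln (1 + x\<^sup>2)) \<partial>\<rho>) < \<infinity>" and "c > 0"
  shows "summable (\<lambda>n. measure N {\<omega> \<in> space N. (1/4) ^ n < measure (D \<omega>) (dyadic_shell n)})"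
proof -
  define p where "p n = measure \<rho> (dyadic_shell n)" for n
  define q where "q = (1/2::real) powr (c / 2)"
  have q: "0 < q" "q < 1"
    using \<open>c > 0\<close> by (auto simp: q_def powr01_less_one)
  have np: "summable (\<lambda>n. real n * p n)"
    unfolding p_def using prob_space.finite_measure[OF \<rho>(1)] \<rho>(2) log
    by (rule summable_dyadic_shell_log_moment)
  have "summable p"
  proof (rule summable_comparison_test_ev[OF _ np])
    show "eventually (\<lambda>n. norm (p n) \<le> real n * p n) sequentially"
      using eventually_ge_at_top[of 1]
      by eventually_elim (simp add: p_def mult_le_cancel_right1)
  qed
  then have "p \<longlonglongrightarrow> 0"
    by (rule summable_LIMSEQ_zero)
  then have "eventually (\<lambda>n. p n < min (1 / c) (1 / 2)) sequentially"
    using \<open>c > 0\<close> by (intro order_tendstoD) auto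
  then have "eventually (\<lambda>n. norm (measure N {\<omega> \<in> space N. (1/4) ^ n < measure (D \<omega>) (dyadic_shell n)})
      \<le> exp 2 * c * (p n + ln 8 * (real n * p n)) + exp 2 * q ^ n) sequentially"
  proof eventually_elim
    case (elim n)
    then have "c * p n \<le> 1" "p n \<le> 1 / 2"
      using \<open>c > 0\<close> by (auto simp: field_simps)
    then show ?case
      using dirichlet_process_dyadic_shell_tail_le[OF dp \<rho> \<open>c > 0\<close>, of n] by (simp add: p_def q_def)
  qed
  moreover have "summable (\<lambda>n. exp 2 * c * (p n + ln 8 * (real n * p n)) + exp 2 * q ^ n)"
    using \<open>summable p\<close> np q by (intro summable_add summable_mult summable_geometric) auto
  ultimately show ?thesis
    by (rule summable_comparison_test_ev)
qed

lemma AE_dirichlet_process_integrable: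
  assumes dp: "is_dirichlet_process N c \<rho> D" and \<rho>: "prob_space \<rho>" "sets \<rho> = sets borel"
    and log: "(\<integral>\<^sup>+x. ennreal (ln (1 + x\<^sup>2)) \<partial>\<rho>) < \<infinity>" and "c > 0"
  shows "AE \<omega> in N. integrable (D \<omega>) (\<lambda>x. x)"
proof -
  interpret N: prob_space N
    using dirichlet_process_prob_space[OF dp] .
  have [measurable]: "D \<in> N \<rightarrow>\<^sub>M prob_algebra borel"
    using measurable_dirichlet_process[OF dp] .
  have "AE \<omega> in N. eventually (\<lambda>n. \<omega> \<in> space N - {\<omega> \<in> space N. (1/4) ^ n < measure (D \<omega>) (dyadic_shell n)}) sequentially"
    using summable_dirichlet_process_shell_tails[OF assms]
    by (intro borel_cantelli_AE1) (auto simp: N.emeasure_eq_measure)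
  then show ?thesis
    using AE_space
  proof eventually_elim
    case (elim \<omega>)
    have "eventually (\<lambda>n. norm (2 ^ n * measure (D \<omega>) (dyadic_shell n)) \<le> (1/2) ^ n) sequentially"
      using elim(1)
    proof eventually_elim
      case (elim n)
      then have "2 ^ n * measure (D \<omega>) (dyadic_shell n) \<le> 2 ^ n * (1/4) ^ n"
        by (auto simp: not_less)
      also have "(2::real) ^ n * (1/4) ^ n = (1/2) ^ n"
        by (simp add: power_mult_distrib[symmetric])
      finally show ?case by simp
    qed
    then have "summable (\<lambda>n. 2 ^ n * measure (D \<omega>) (dyadic_shell n))"
      by (rule summable_comparison_test_ev) simp
    then show ?case
      using prob_space_dirichlet_process_sample[OF dp elim(2)] sets_dirichlet_process_sample[OF dp elim(2)]
      by (intro integrable_if_summable_dyadic_shells prob_space.finite_measure)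
  qed
qed

section \<open>Discretisation of the clipped mean\<close>

definition clip :: "real \<Rightarrow> real \<Rightarrow> real" where
  "clip M x = max (- M) (min M x)"

lemma truncate_measure_eq_distr_clip: "truncate_measure M \<rho> = distr \<rho> borel (clip M)"
  by (simp add: truncate_measure_def clip_def[abs_def])

lemma borel_measurable_clip [measurable]: "clip M \<in> borel_measurable borel"
  unfolding clip_def by measurable

lemma clip_idem: "M \<ge> 0 \<Longrightarrow> clip M (clip M x) = clip M x"
  by (simp add: clip_def)

lemma abs_clip_le: "M \<ge> 0 \<Longrightarrow> \<bar>clip M x\<bar> \<le> M"
  by (simp add: clip_def)

lemma clip_eq_self: "\<bar>x\<bar> \<le> M \<Longrightarrow> clip M x = x"
  by (simp add: clip_def)

text \<open>
  Cell \<open>j < K\<close> consists of the points whose clipped value lies in \<open>[-M + j h, -M + (j + 1) h)\<close>,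
  where \<open>h = 2 M / K\<close> (the last cell also contains \<open>M\<close>); so every cell is a union of fibres of
  \<open>clip M\<close>.
\<close>

definition grid_index :: "real \<Rightarrow> nat \<Rightarrow> real \<Rightarrow> nat" where
  "grid_index M K x = min (K - 1) (nat \<lfloor>(clip M x + M) / (2 * M / K)\<rfloor>)"

definition grid_cell :: "real \<Rightarrow> nat \<Rightarrow> nat \<Rightarrow> real set" where
  "grid_cell M K j = {x. grid_index M K x = j}"

definition grid_point :: "real \<Rightarrow> nat \<Rightarrow> nat \<Rightarrow> real" where
  "grid_point M K j = - M + real j * (2 * M / K)"

definition grid_sum :: "real \<Rightarrow> nat \<Rightarrow> (nat \<Rightarrow> real) \<Rightarrow> real" where
  "grid_sum M K v = (\<Sum>j<K. grid_point M K j * v j)"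

lemma measurable_grid_index [measurable]: "grid_index M K \<in> borel \<rightarrow>\<^sub>M count_space UNIV"
  unfolding grid_index_def by measurable

lemma grid_cell_sets [measurable]: "grid_cell M K j \<in> sets borel"
proof -
  have "grid_cell M K j = grid_index M K -` {j} \<inter> space borel"
    by (auto simp: grid_cell_def)
  also have "\<dots> \<in> sets borel"
    by (rule measurable_sets[OF measurable_grid_index]) simp
  finally show ?thesis .
qed

lemma borel_measurable_grid_sum [measurable]: "grid_sum M K \<in> borel_measurable (PiM {..<K} (\<lambda>_. borel))"
  unfolding grid_sum_def by measurable

lemma grid_index_clip: "M \<ge> 0 \<Longrightarrow> grid_index M K (clip M x) = grid_index M K x"
  by (simp add: grid_index_def clip_idem)

lemma grid_index_less: "K \<ge> 1 \<Longrightarrow> grid_index M K x < K"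
  by (simp add: grid_index_def)

lemma disjoint_family_grid_cell: "disjoint_family_on (grid_cell M K) {..<K}"
  by (auto simp: disjoint_family_on_def grid_cell_def)

lemma UN_grid_cell: "K \<ge> 1 \<Longrightarrow> (\<Union>j<K. grid_cell M K j) = UNIV"
  using grid_index_less by (auto simp: grid_cell_def)

lemma grid_point_index_approx:
  assumes "M > 0" "K \<ge> 1"
  shows "\<bar>grid_point M K (grid_index M K x) - clip M x\<bar> \<le> 2 * M / K"
proof -
  define h where "h = 2 * M / K"
  define u where "u = (clip M x + M) / h"
  have h: "h > 0"
    using assms by (simp add: h_def)
  have "\<bar>clip M x\<bar> \<le> M"
    using assms by (intro abs_clip_le) simp
  moreover have "real K * h = 2 * M"
    using assms by (simp add: h_def)
  ultimately have u: "0 \<le> u" "u \<le> K"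
    using h by (auto simp: u_def pos_divide_le_eq)
  have clip: "clip M x = - M + u * h"
    using h by (simp add: u_def)
  have index: "grid_index M K x = min (K - 1) (nat \<lfloor>u\<rfloor>)"
    by (simp add: grid_index_def u_def h_def)
  have "\<bar>real (min (K - 1) (nat \<lfloor>u\<rfloor>)) - u\<bar> \<le> 1"
    using u assms by (auto simp: min_def of_nat_diff) linarith+
  then have "\<bar>real (grid_index M K x) - u\<bar> * h \<le> 1 * h"
    using h by (intro mult_right_mono) (auto simp: index)
  moreover have "grid_point M K (grid_index M K x) - clip M x = (real (grid_index M K x) - u) * h"
    using assms by (simp add: grid_point_def clip h_def field_simps)
  ultimately show ?thesis
    using h unfolding h_def[symmetric] by (simp add: abs_mult)
qed

lemma grid_point_index_eq_sum:
  assumes "K \<ge> 1"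
  shows "grid_point M K (grid_index M K x) = (\<Sum>j<K. grid_point M K j * indicator (grid_cell M K j) x)"
proof -
  have "(\<Sum>j<K. grid_point M K j * indicator (grid_cell M K j) x)
      = (\<Sum>j\<in>{grid_index M K x}. grid_point M K j * indicator (grid_cell M K j) x)"
    using grid_index_less[OF assms] by (intro sum.mono_neutral_right) (auto simp: grid_cell_def)
  then show ?thesis
    by (simp add: grid_cell_def)
qed

lemma
  assumes "finite_measure \<mu>" "sets \<mu> = sets borel" "K \<ge> 1"
  shows integrable_grid_point_index: "integrable \<mu> (\<lambda>x. grid_point M K (grid_index M K x))"
    and integral_grid_point_index:
      "(\<integral>x. grid_point M K (grid_index M K x) \<partial>\<mu>) = grid_sum M K (\<lambda>j. measure \<mu> (grid_cell M K j))"
proof -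
  interpret finite_measure \<mu> by fact
  have [measurable]: "grid_cell M K j \<in> sets \<mu>" for j
    using assms(2) by simp
  have integrable: "integrable \<mu> (\<lambda>x. grid_point M K j * indicator (grid_cell M K j) x)" for j
    by (intro integrable_mult_right integrable_real_indicator) (auto simp: emeasure_eq_measure)
  show "integrable \<mu> (\<lambda>x. grid_point M K (grid_index M K x))"
    unfolding grid_point_index_eq_sum[OF assms(3)] by (intro Bochner_Integration.integrable_sum integrable)
  have "(\<integral>x. grid_point M K (grid_index M K x) \<partial>\<mu>)
      = (\<Sum>j<K. \<integral>x. grid_point M K j * indicator (grid_cell M K j) x \<partial>\<mu>)"
    unfolding grid_point_index_eq_sum[OF assms(3)] by (intro Bochner_Integration.integral_sum integrable)
  also have "\<dots> = grid_sum M K (\<lambda>j. measure \<mu> (grid_cell M K j))"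
    using sets.sets_into_space by (simp add: grid_sum_def Int_absorb2)
  finally show "(\<integral>x. grid_point M K (grid_index M K x) \<partial>\<mu>) = grid_sum M K (\<lambda>j. measure \<mu> (grid_cell M K j))" .
qed

lemma grid_sum_approx:
  assumes \<mu>: "prob_space \<mu>" "sets \<mu> = sets borel" and "M > 0" "K \<ge> 1"
  shows "\<bar>grid_sum M K (\<lambda>j. measure \<mu> (grid_cell M K j)) - (\<integral>x. clip M x \<partial>\<mu>)\<bar> \<le> 2 * M / K"
proof -
  interpret prob_space \<mu> by fact
  have [measurable]: "clip M \<in> borel_measurable \<mu>"
    by (simp add: measurable_cong_sets[OF \<mu>(2) refl])
  have clip: "integrable \<mu> (clip M)"
    using abs_clip_le \<open>M > 0\<close> by (intro integrable_const_bound[where B=M]) auto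
  have step: "integrable \<mu> (\<lambda>x. grid_point M K (grid_index M K x))"
    using \<mu> assms by (intro integrable_grid_point_index) auto
  have "\<bar>grid_sum M K (\<lambda>j. measure \<mu> (grid_cell M K j)) - (\<integral>x. clip M x \<partial>\<mu>)\<bar>
      = \<bar>\<integral>x. grid_point M K (grid_index M K x) - clip M x \<partial>\<mu>\<bar>"
    using \<mu> assms clip step by (simp add: integral_grid_point_index)
  also have "\<dots> \<le> (\<integral>x. \<bar>grid_point M K (grid_index M K x) - clip M x\<bar> \<partial>\<mu>)"
    by (rule integral_abs_bound)
  also have "\<dots> \<le> 2 * M / K"
    using clip step grid_point_index_approx[OF \<open>M > 0\<close> \<open>K \<ge> 1\<close>] by (intro integral_le_const) auto
  finally show ?thesis .
qed

lemma tendsto_grid_sum: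
  assumes "prob_space \<mu>" "sets \<mu> = sets borel" "M > 0"
  shows "(\<lambda>K. grid_sum M (Suc K) (\<lambda>j. measure \<mu> (grid_cell M (Suc K) j))) \<longlonglongrightarrow> (\<integral>x. clip M x \<partial>\<mu>)"
proof -
  have "(\<lambda>K. grid_sum M (Suc K) (\<lambda>j. measure \<mu> (grid_cell M (Suc K) j)) - (\<integral>x. clip M x \<partial>\<mu>)) \<longlonglongrightarrow> 0"
  proof (rule Lim_null_comparison)
    show "eventually (\<lambda>K. norm (grid_sum M (Suc K) (\<lambda>j. measure \<mu> (grid_cell M (Suc K) j)) - (\<integral>x. clip M x \<partial>\<mu>))
        \<le> 2 * M / Suc K) sequentially"
    proof (intro always_eventually allI)
      fix K
      show "norm (grid_sum M (Suc K) (\<lambda>j. measure \<mu> (grid_cell M (Suc K) j)) - (\<integral>x. clip M x \<partial>\<mu>))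
          \<le> 2 * M / Suc K"
        using grid_sum_approx[OF assms, of "Suc K"] by simp
    qed
    show "(\<lambda>K. 2 * M / Suc K) \<longlonglongrightarrow> 0"
      using LIMSEQ_Suc[OF lim_const_over_n[of "2 * M"]] by simp
  qed
  then show ?thesis
    by (simp add: LIM_zero_iff)
qed

lemma integral_grid_sum_dirichlet_process:
  fixes f :: "real \<Rightarrow> real"
  assumes dp: "is_dirichlet_process N c \<rho> D" and "K \<ge> 1" and [measurable]: "f \<in> borel_measurable borel"
  shows "(\<integral>\<omega>. f (grid_sum M K (\<lambda>j. measure (D \<omega>) (grid_cell M K j))) \<partial>N)
    = (\<integral>v. f (grid_sum M K v) \<partial>dirichlet K (\<lambda>j. c * measure \<rho> (grid_cell M K j)))"
proof -
  have "grid_sum M K (\<lambda>j\<in>{..<K}. measure (D \<omega>) (grid_cell M K j)) = grid_sum M K (\<lambda>j. measure (D \<omega>) (grid_cell M K j))"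
    for \<omega> by (simp add: grid_sum_def)
  then show ?thesis
    using integral_dirichlet_process_partition[OF dp \<open>K \<ge> 1\<close> _ disjoint_family_grid_cell[of M K] UN_grid_cell[OF \<open>K \<ge> 1\<close>],
        where g="\<lambda>v. f (grid_sum M K v)"]
    by simp
qed

lemma tendsto_integral_grid_sum:
  fixes f :: "real \<Rightarrow> real"
  assumes "finite_measure N" and [measurable]: "D \<in> N \<rightarrow>\<^sub>M prob_algebra borel"
    and "M > 0" and f: "continuous_on UNIV f" "\<And>x. \<bar>f x\<bar> \<le> B"
  shows "(\<lambda>K. \<integral>\<omega>. f (grid_sum M (Suc K) (\<lambda>j. measure (D \<omega>) (grid_cell M (Suc K) j))) \<partial>N)
    \<longlonglongrightarrow> (\<integral>\<omega>. f (\<integral>x. clip M x \<partial>D \<omega>) \<partial>N)"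
proof -
  interpret finite_measure N by fact
  have [measurable]: "f \<in> borel_measurable borel"
    using f(1) by (rule borel_measurable_continuous_onI)
  have [measurable]: "D \<in> N \<rightarrow>\<^sub>M subprob_algebra borel"
    by (rule measurable_prob_algebraD) measurable
  show ?thesis
  proof (rule integral_dominated_convergence[where w="\<lambda>_. B"])
    show "AE \<omega> in N. (\<lambda>K. f (grid_sum M (Suc K) (\<lambda>j. measure (D \<omega>) (grid_cell M (Suc K) j))))
        \<longlonglongrightarrow> f (\<integral>x. clip M x \<partial>D \<omega>)"
    proof (rule AE_I2)
      fix \<omega> assume "\<omega> \<in> space N"
      then have "D \<omega> \<in> space (prob_algebra borel)"
        by (rule measurable_space[OF assms(2)])
      then show "(\<lambda>K. f (grid_sum M (Suc K) (\<lambda>j. measure (D \<omega>) (grid_cell M (Suc K) j))))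
          \<longlonglongrightarrow> f (\<integral>x. clip M x \<partial>D \<omega>)"
        using f(1) \<open>M > 0\<close>
        by (intro continuous_on_tendsto_compose[OF f(1) tendsto_grid_sum]) (auto simp: space_prob_algebra)
    qed
  qed (use f(2) in \<open>auto simp: grid_sum_def\<close>)
qed

section \<open>The truncated process\<close>

lemma integral_random_mean_law:
  fixes f :: "real \<Rightarrow> real"
  assumes "D \<in> N \<rightarrow>\<^sub>M prob_algebra borel" and [measurable]: "f \<in> borel_measurable borel"
  shows "(\<integral>x. f x \<partial>random_mean_law N D) = (\<integral>\<omega>. f (\<integral>x. x \<partial>D \<omega>) \<partial>N)"
proof -
  have [measurable]: "D \<in> N \<rightarrow>\<^sub>M subprob_algebra borel"
    using measurable_prob_algebraD[OF assms(1)] .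
  show ?thesis
    unfolding random_mean_law_def by (rule integral_distr) measurable
qed

lemma measure_truncate_grid_cell:
  assumes "sets \<rho> = sets borel" "M \<ge> 0"
  shows "measure (truncate_measure M \<rho>) (grid_cell M K j) = measure \<rho> (grid_cell M K j)"
proof -
  have "clip M -` grid_cell M K j \<inter> space \<rho> = grid_cell M K j"
    using sets_eq_imp_space_eq[OF assms(1)] grid_index_clip[OF assms(2)] by (auto simp: grid_cell_def)
  then show ?thesis
    unfolding truncate_measure_eq_distr_clip
    by (subst measure_distr) (simp_all add: measurable_cong_sets[OF assms(1) refl])
qed

lemma AE_truncated_dirichlet_process_mean_eq:
  assumes dp: "is_dirichlet_process N c (truncate_measure M \<rho>) D"
    and "sets \<rho> = sets borel" "c \<ge> 0" "M \<ge> 0"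
  shows "AE \<omega> in N. (\<integral>x. x \<partial>D \<omega>) = (\<integral>x. clip M x \<partial>D \<omega>)"
proof -
  have "measure (truncate_measure M \<rho>) (- {-M..M}) = 0"
  proof -
    have "clip M -` (- {-M..M}) \<inter> space \<rho> = {}"
      using \<open>M \<ge> 0\<close> by (auto simp: clip_def)
    then show ?thesis
      unfolding truncate_measure_eq_distr_clip
      by (subst measure_distr) (simp_all add: measurable_cong_sets[OF assms(2) refl])
  qed
  then have "AE \<omega> in N. measure (D \<omega>) (- {-M..M}) = 0"
    using assms by (intro AE_dirichlet_process_null[OF dp]) auto
  then show ?thesis
    using AE_space
  proof eventually_elim
    case (elim \<omega>)
    interpret prob_space "D \<omega>"
      using prob_space_dirichlet_process_sample[OF dp elim(2)] .
    have sets: "sets (D \<omega>) = sets borel"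
      using sets_dirichlet_process_sample[OF dp elim(2)] .
    have "- {-M..M} \<in> null_sets (D \<omega>)"
      using elim(1) sets by (intro null_setsI) (auto simp: emeasure_eq_measure)
    from AE_not_in[OF this] have "AE x in D \<omega>. x = clip M x"
      by eventually_elim (auto simp: clip_def)
    then show ?case
      by (intro integral_cong_AE) (simp_all add: measurable_cong_sets[OF sets refl])
  qed
qed

lemma integral_random_mean_law_truncate:
  fixes f :: "real \<Rightarrow> real"
  assumes \<rho>: "sets \<rho> = sets borel" and "c > 0" "M > 0"
    and dpM: "is_dirichlet_process \<Omega> c (truncate_measure M \<rho>) DM"
    and dp: "is_dirichlet_process N c \<rho> D"
    and f: "continuous_on UNIV f" "\<And>x. \<bar>f x\<bar> \<le> B"
  shows "(\<integral>x. f x \<partial>random_mean_law \<Omega> DM) = (\<integral>\<omega>. f (\<integral>x. clip M x \<partial>D \<omega>) \<partial>N)"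
proof -
  have [measurable]: "f \<in> borel_measurable borel"
    using f(1) by (rule borel_measurable_continuous_onI)
  have [measurable]: "DM \<in> \<Omega> \<rightarrow>\<^sub>M subprob_algebra borel"
    using measurable_prob_algebraD[OF measurable_dirichlet_process[OF dpM]] .
  have mean_eq: "(\<integral>x. f x \<partial>random_mean_law \<Omega> DM) = (\<integral>\<omega>. f (\<integral>x. clip M x \<partial>DM \<omega>) \<partial>\<Omega>)"
    unfolding integral_random_mean_law[OF measurable_dirichlet_process[OF dpM] \<open>f \<in> borel_measurable borel\<close>]
    using AE_truncated_dirichlet_process_mean_eq[OF dpM \<rho>] \<open>c > 0\<close> \<open>M > 0\<close>
    by (intro integral_cong_AE) auto
  have lim_\<Omega>: "(\<lambda>K. \<integral>\<omega>. f (grid_sum M (Suc K) (\<lambda>j. measure (DM \<omega>) (grid_cell M (Suc K) j))) \<partial>\<Omega>)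
      \<longlonglongrightarrow> (\<integral>\<omega>. f (\<integral>x. clip M x \<partial>DM \<omega>) \<partial>\<Omega>)"
    using dirichlet_process_prob_space[OF dpM] measurable_dirichlet_process[OF dpM] \<open>M > 0\<close> f
    by (intro tendsto_integral_grid_sum prob_space.finite_measure)
  have lim_N: "(\<lambda>K. \<integral>\<omega>. f (grid_sum M (Suc K) (\<lambda>j. measure (D \<omega>) (grid_cell M (Suc K) j))) \<partial>N)
      \<longlonglongrightarrow> (\<integral>\<omega>. f (\<integral>x. clip M x \<partial>D \<omega>) \<partial>N)"
    using dirichlet_process_prob_space[OF dp] measurable_dirichlet_process[OF dp] \<open>M > 0\<close> f
    by (intro tendsto_integral_grid_sum prob_space.finite_measure)
  have grid_eq: "(\<integral>\<omega>. f (grid_sum M (Suc K) (\<lambda>j. measure (DM \<omega>) (grid_cell M (Suc K) j))) \<partial>\<Omega>)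
      = (\<integral>\<omega>. f (grid_sum M (Suc K) (\<lambda>j. measure (D \<omega>) (grid_cell M (Suc K) j))) \<partial>N)" for K
    using \<rho> \<open>M > 0\<close>
    by (simp add: integral_grid_sum_dirichlet_process[OF dpM] integral_grid_sum_dirichlet_process[OF dp]
        measure_truncate_grid_cell)
  show ?thesis
    unfolding mean_eq using lim_\<Omega> unfolding grid_eq by (rule LIMSEQ_unique[OF _ lim_N])
qed

section \<open>Letting the truncation level grow\<close>

lemma tendsto_integral_clip:
  assumes "sets \<mu> = sets borel" "integrable \<mu> (\<lambda>x. x)"
  shows "((\<lambda>M. \<integral>x. clip M x \<partial>\<mu>) \<longlongrightarrow> (\<integral>x. x \<partial>\<mu>)) at_top"
proof (rule integral_dominated_convergence_at_top[where w="\<lambda>x. \<bar>x\<bar>"])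
  show "AE x in \<mu>. ((\<lambda>M. clip M x) \<longlongrightarrow> x) at_top"
  proof (rule AE_I2)
    fix x :: real
    have "eventually (\<lambda>M. clip M x = x) at_top"
      using eventually_ge_at_top[of "\<bar>x\<bar>"] by eventually_elim (rule clip_eq_self)
    then show "((\<lambda>M. clip M x) \<longlongrightarrow> x) at_top"
      by (rule tendsto_eventually)
  qed
  show "\<forall>\<^sub>F M in at_top. AE x in \<mu>. norm (clip M x) \<le> \<bar>x\<bar>"
    using eventually_ge_at_top[of "0::real"] by eventually_elim (intro AE_I2, auto simp: clip_def)
  show "(\<lambda>x. x) \<in> borel_measurable \<mu>"
    by (rule measurable_ident_sets[OF assms(1)])
  show "clip M \<in> borel_measurable \<mu>" for M
    by (simp add: measurable_cong_sets[OF assms(1) refl])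
  show "integrable \<mu> (\<lambda>x. \<bar>x\<bar>)"
    using assms(2) by (rule integrable_abs)
qed

lemma tendsto_integral_clipped_mean:
  fixes f :: "real \<Rightarrow> real"
  assumes "finite_measure N" and [measurable]: "D \<in> N \<rightarrow>\<^sub>M prob_algebra borel"
    and integrable: "AE \<omega> in N. integrable (D \<omega>) (\<lambda>x. x)"
    and f: "continuous_on UNIV f" "\<And>x. \<bar>f x\<bar> \<le> B"
  shows "((\<lambda>M. \<integral>\<omega>. f (\<integral>x. clip M x \<partial>D \<omega>) \<partial>N) \<longlongrightarrow> (\<integral>x. f x \<partial>random_mean_law N D)) at_top"
proof -
  interpret finite_measure N by fact
  have [measurable]: "f \<in> borel_measurable borel"
    using f(1) by (rule borel_measurable_continuous_onI)
  have [measurable]: "D \<in> N \<rightarrow>\<^sub>M subprob_algebra borel"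
    by (rule measurable_prob_algebraD) measurable
  show ?thesis
    unfolding integral_random_mean_law[OF assms(2) \<open>f \<in> borel_measurable borel\<close>]
  proof (rule integral_dominated_convergence_at_top[where w="\<lambda>_. B"])
    show "AE \<omega> in N. ((\<lambda>M. f (\<integral>x. clip M x \<partial>D \<omega>)) \<longlongrightarrow> f (\<integral>x. x \<partial>D \<omega>)) at_top"
      using integrable AE_space
    proof eventually_elim
      case (elim \<omega>)
      have "D \<omega> \<in> space (prob_algebra borel)"
        using measurable_space[OF assms(2) elim(2)] .
      then show ?case
        using elim(1) by (intro continuous_on_tendsto_compose[OF f(1) tendsto_integral_clip])
          (auto simp: space_prob_algebra)
    qed
  qed (use f(2) in auto)
qed

theorem lemma2p10:
  fixes \<rho> :: "real measure" and c :: real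
    and \<Omega> :: "real \<Rightarrow> 'a measure" and DM :: "real \<Rightarrow> 'a \<Rightarrow> real measure"
    and N :: "'b measure" and D :: "'b \<Rightarrow> real measure"
  assumes "prob_space \<rho>" and "sets \<rho> = sets borel"
    and "(\<integral>\<^sup>+x. ennreal (ln (1 + x\<^sup>2)) \<partial>\<rho>) < \<infinity>"
    and "c > 0"
    and "\<And>M. M > 0 \<Longrightarrow> is_dirichlet_process (\<Omega> M) c (truncate_measure M \<rho>) (DM M)"
    and "is_dirichlet_process N c \<rho> D"
  shows "weak_conv_at_top (\<lambda>M. random_mean_law (\<Omega> M) (DM M)) (random_mean_law N D)"
  unfolding weak_conv_at_top_def
proof (intro allI impI, elim conjE)
  fix f :: "real \<Rightarrow> real"
  assume f: "continuous_on UNIV f" "bounded (range f)"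
  then obtain B where B: "\<And>x. \<bar>f x\<bar> \<le> B"
    by (auto simp: bounded_iff)
  have "eventually (\<lambda>M. (\<integral>\<omega>. f (\<integral>x. clip M x \<partial>D \<omega>) \<partial>N)
      = (\<integral>x. f x \<partial>random_mean_law (\<Omega> M) (DM M))) at_top"
    using eventually_gt_at_top[of 0]
  proof eventually_elim
    case (elim M)
    show ?case
      using integral_random_mean_law_truncate[OF assms(2,4) elim assms(5)[OF elim] assms(6) f(1) B] by (rule sym)
  qed
  moreover have "((\<lambda>M. \<integral>\<omega>. f (\<integral>x. clip M x \<partial>D \<omega>) \<partial>N) \<longlongrightarrow> (\<integral>x. f x \<partial>random_mean_law N D)) at_top"
    using dirichlet_process_prob_space[OF assms(6)] measurable_dirichlet_process[OF assms(6)]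
      AE_dirichlet_process_integrable[OF assms(6,1,2,3,4)] f(1) B
    by (intro tendsto_integral_clipped_mean prob_space.finite_measure)
  ultimately show "((\<lambda>M. \<integral>x. f x \<partial>random_mean_law (\<Omega> M) (DM M)) \<longlongrightarrow> (\<integral>x. f x \<partial>random_mean_law N D)) at_top"
    by (rule tendsto_cong[THEN iffD1])
qed

end
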